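(* Let $\eta$ be a primitive $7$-th root of unity and let $F(x,y,z)= x^7 + y^7 + z^7 + 14(x^3 y^2 + x^2 z^3 + y^3 z^2 + xyz) + 7(x^5 y + x z^5 + y^5 z + x y^3 + x^3 z + y z^3) + 7( x y^2 z^4 + x^2 y^4 z + x^4 y z^2 + x^2 y^2 z^2)$. Let $G(x,y,z)$ be a real polynomial with $G(\eta x,\eta^2y,\eta^4z)=G(x,y,z)$, $G=1$ on the plane $x+y+z=1$, only non-negative coefficients, and $G(0,0,0)=0$. Then either $G=F$ or $\deg G\ge 10$.
   Context: The invariance condition is equivalent to: every monomial $x^ay^bz^c$ of $G$ satisfies $a+2b+4c\equiv0\pmod 7$. *)

theory Defs
  imports Complex_Main
begin

text \<open>A polynomial in three variables x,y,z with real coefficients is represented by its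
coefficient function: c (a,b,d) is the coefficient of x^a y^b z^d; the support is finite.\<close>

type_synonym poly3 = "nat \<times> nat \<times> nat \<Rightarrow> real"

definition supp3 :: "poly3 \<Rightarrow> (nat \<times> nat \<times> nat) set" where
  "supp3 c = {m. c m \<noteq> 0}"

definition is_poly3 :: "poly3 \<Rightarrow> bool" where
  "is_poly3 c \<longleftrightarrow> finite (supp3 c)"

definition eval3 :: "poly3 \<Rightarrow> 'a::{real_algebra_1,comm_ring_1} \<Rightarrow> 'a \<Rightarrow> 'a \<Rightarrow> 'a" where
  "eval3 c x y z = (\<Sum>(a,b,d)\<in>supp3 c. of_real (c (a,b,d)) * x ^ a * y ^ b * z ^ d)"

text \<open>Total degree (0 for the zero polynomial).\<close>
definition tdeg3 :: "poly3 \<Rightarrow> nat" where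
  "tdeg3 c = Max (insert 0 ((\<lambda>(a,b,d). a + b + d) ` supp3 c))"

definition Fc :: poly3 where
  "Fc m = (if m \<in> {(7,0,0),(0,7,0),(0,0,7)} then 1
     else if m \<in> {(3,2,0),(2,0,3),(0,3,2),(1,1,1)} then 14
     else if m \<in> {(5,1,0),(1,0,5),(0,5,1),(1,3,0),(3,0,1),(0,1,3),
                  (1,2,4),(2,4,1),(4,1,2),(2,2,2)} then 7
     else 0)"

end

theory Submission
  imports Defs
begin

(*
  Put w(a,b,d) = a + 2b + 4d. Substituting (1,1,1) into the invariance gives
  \<Sum> G_m \<eta>^w(m) = \<Sum> G_m; since the coefficients are non-negative and |\<eta>^w(m)| = 1, and 1 is an
  extreme point of the unit disc, every monomial m of G has \<eta>^w(m) = 1, i.e. 7 divides w(m).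
  If moreover deg G \<le> 9 and G(0,0,0) = 0, only 30 monomials can occur, and G = 1 on the plane
  x + y + z = 1 is a linear system for their 30 coefficients. Evaluating at 30 suitable points of
  the plane already gives an invertible system, whose unique solution is the coefficient vector of F.
*)

lemma weighted_sum_unit_disc_eq_1:
  fixes c :: "'a \<Rightarrow> real" and u :: "'a \<Rightarrow> complex"
  assumes "finite A" and "\<And>j. j \<in> A \<Longrightarrow> 0 \<le> c j" and "\<And>j. j \<in> A \<Longrightarrow> cmod (u j) \<le> 1"
    and sum_eq: "(\<Sum>j\<in>A. of_real (c j) * u j) = of_real (\<Sum>j\<in>A. c j)"
    and "i \<in> A" and "c i \<noteq> 0"
  shows "u i = 1"
proof -
  have "(\<Sum>j\<in>A. c j * Re (u j)) = (\<Sum>j\<in>A. c j)"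
    using arg_cong[OF sum_eq, of Re] by (simp add: Re_sum)
  then have sum_0: "(\<Sum>j\<in>A. c j * (1 - Re (u j))) = 0"
    by (simp add: right_diff_distrib sum_subtractf)
  have nonneg: "0 \<le> c j * (1 - Re (u j))" if "j \<in> A" for j
    using assms(2,3)[OF that] complex_Re_le_cmod[of "u j"] by simp
  have "\<forall>j\<in>A. c j * (1 - Re (u j)) = 0"
    using sum_nonneg_eq_0_iff[OF \<open>finite A\<close> nonneg] sum_0 by simp
  then have "c i * (1 - Re (u i)) = 0"
    using \<open>i \<in> A\<close> by blast
  then have Re_1: "Re (u i) = 1"
    using \<open>c i \<noteq> 0\<close> by simp
  have "(cmod (u i))\<^sup>2 \<le> 1"
    using assms(3)[OF \<open>i \<in> A\<close>] by (simp add: power_le_one)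
  then have "Im (u i) = 0"
    using Re_1 by (simp add: cmod_power2)
  then show "u i = 1"
    using Re_1 by (simp add: complex_eq_iff)
qed

lemma dvd_if_primitive_root_power_eq_1:
  fixes \<eta> :: "'a::monoid_mult"
  assumes "0 < n" and "\<eta> ^ n = 1" and "\<forall>k. 0 < k \<and> k < n \<longrightarrow> \<eta> ^ k \<noteq> 1"
    and "\<eta> ^ m = 1"
  shows "n dvd m"
proof (rule ccontr)
  assume "\<not> n dvd m"
  then have "0 < m mod n" and "m mod n < n"
    using \<open>0 < n\<close> by (simp_all add: dvd_eq_mod_eq_0)
  then have "\<eta> ^ (m mod n) \<noteq> 1"
    using assms(3) by blast
  moreover have "\<eta> ^ m = (\<eta> ^ n) ^ (m div n) * \<eta> ^ (m mod n)"
    by (simp flip: power_mult power_add)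
  ultimately show False
    using assms(2,4) by simp
qed

lemma weight_dvd_if_eval3_root_of_unity_eq:
  fixes \<eta> :: complex and G :: poly3
  assumes "0 < n" and "\<eta> ^ n = 1" and "\<forall>k. 0 < k \<and> k < n \<longrightarrow> \<eta> ^ k \<noteq> 1"
    and "is_poly3 G" and "\<forall>m. 0 \<le> G m"
    and eval_eq: "eval3 G (\<eta> ^ p) (\<eta> ^ q) (\<eta> ^ r) = eval3 G 1 1 1"
    and "(a, b, d) \<in> supp3 G"
  shows "n dvd p * a + q * b + r * d"
proof -
  define w where "w = (\<lambda>(a::nat, b::nat, d::nat). p * a + q * b + r * d)"
  have norm_\<eta>: "cmod \<eta> = 1"
    using power_eq_1_iff[OF \<open>\<eta> ^ n = 1\<close>] \<open>0 < n\<close> by simp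
  have "eval3 G (\<eta> ^ p) (\<eta> ^ q) (\<eta> ^ r) = (\<Sum>m\<in>supp3 G. of_real (G m) * \<eta> ^ w m)"
    unfolding eval3_def w_def
    by (rule sum.cong) (auto simp: power_mult[symmetric] power_add mult.commute mult.left_commute)
  moreover have "eval3 G (1::complex) 1 1 = of_real (\<Sum>m\<in>supp3 G. G m)"
    unfolding eval3_def by (simp add: case_prod_beta)
  ultimately have "\<eta> ^ w (a, b, d) = 1"
    using eval_eq assms(4,5,7)
    by (intro weighted_sum_unit_disc_eq_1[where A = "supp3 G" and c = G])
      (auto simp: is_poly3_def supp3_def norm_power norm_\<eta>)
  then show ?thesis
    using dvd_if_primitive_root_power_eq_1 assms(1-3) by (simp add: w_def)
qed

lemma le_tdeg3:
  assumes "is_poly3 c" and "(a, b, d) \<in> supp3 c"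
  shows "a + b + d \<le> tdeg3 c"
  unfolding tdeg3_def using assms by (intro Max_ge) (force simp: is_poly3_def)+

lemma eval3_origin:
  assumes "is_poly3 c"
  shows "eval3 c (0::real) 0 0 = c (0, 0, 0)"
proof -
  have "eval3 c (0::real) 0 0 = (\<Sum>m\<in>supp3 c. if m = (0, 0, 0) then c m else 0)"
    unfolding eval3_def by (rule sum.cong) (auto simp: power_0_left split: if_splits)
  then show ?thesis
    using assms by (simp add: is_poly3_def supp3_def)
qed

lemma eval3_eq_sum_superset:
  assumes "finite T" and "supp3 c \<subseteq> T"
  shows "eval3 c x y z = (\<Sum>(a, b, d)\<in>T. of_real (c (a, b, d)) * x ^ a * y ^ b * z ^ d)"
  unfolding eval3_def by (rule sum.mono_neutral_left) (use assms in \<open>auto simp: supp3_def\<close>)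

definition invariant_monomials :: "(nat \<times> nat \<times> nat) set" where
  "invariant_monomials = {(a, b, d). 0 < a + b + d \<and> a + b + d \<le> 9 \<and> 7 dvd a + 2 * b + 4 * d}"

lemma invariant_monomials_eq:
  "invariant_monomials = set [(0,0,7), (0,1,3), (0,2,6), (0,3,2), (0,4,5), (0,5,1), (0,7,0),
     (1,0,5), (1,1,1), (1,2,4), (1,3,0), (1,4,3), (1,6,2), (2,0,3), (2,1,6), (2,2,2), (2,4,1),
     (2,6,0), (3,0,1), (3,1,4), (3,2,0), (3,3,3), (4,1,2), (4,3,1), (4,5,0), (5,0,4), (5,1,0),
     (6,0,2), (6,2,1), (7,0,0)]"
  (is "_ = set ?monomials")
proof -
  have "invariant_monomials = set [(a, b, d). a \<leftarrow> [0..<10], b \<leftarrow> [0..<10], d \<leftarrow> [0..<10],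
      0 < a + b + d \<and> a + b + d \<le> 9 \<and> 7 dvd a + 2 * b + 4 * d]"
    unfolding invariant_monomials_def by auto
  also have "\<dots> = set ?monomials"
    by code_simp
  finally show ?thesis .
qed

lemma supp3_Fc: "supp3 Fc \<subseteq> invariant_monomials"
  by (auto simp: supp3_def Fc_def invariant_monomials_def split: if_splits)

lemma eq_Fc_if_one_on_plane:
  assumes supp: "supp3 c \<subseteq> invariant_monomials"
    and one: "\<forall>x y z :: real. x + y + z = 1 \<longrightarrow> eval3 c x y z = 1"
  shows "c = Fc"
proof
  have "finite invariant_monomials"
    by (simp add: invariant_monomials_eq)
  then have plane: "(\<Sum>(a, b, d)\<in>invariant_monomials. c (a, b, d) * x ^ a * y ^ b * (1 - x - y) ^ d) = 1"
    for x y :: real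
    using one[rule_format, of x y "1 - x - y"] by (simp add: eval3_eq_sum_superset[OF _ supp])
  (* The 30 points (x, y) stand for (x, y, 1 - x - y): the three vertices, five more points on
     each edge of the coordinate triangle, and twelve interior ones. *)
  note points =
    plane[of 1 0] plane[of 0 1] plane[of 0 0]
    plane[of "-1" 2] plane[of 2 "-1"] plane[of "-2" 3] plane[of 3 "-2"] plane[of "-3" 4]
    plane[of 0 "-1"] plane[of 0 2] plane[of 0 "-2"] plane[of 0 3] plane[of 0 "-3"] plane[of 2 0]
    plane[of "-1" 0] plane[of 3 0] plane[of "-2" 0] plane[of 4 0]
    plane[of "-1" 1] plane[of 1 "-1"] plane[of 1 1] plane[of "-2" 1] plane[of "-2" 2]
    plane[of 1 "-2"] plane[of 1 2] plane[of 2 "-2"] plane[of 2 1] plane[of "-1" "-1"]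
    plane[of "-3" 1] plane[of "-3" 2]
  (* Simp turns the nat numeral 1 into Suc 0, which has to be undone so that algebra sees a
     single atom for each coefficient. *)
  note eqs = points[unfolded invariant_monomials_eq, simplified, unfolded One_nat_def[symmetric]]
  (* The evaluation matrix of the 30 monomials at these points is invertible, so algebra (whose
     Groebner basis computation is here just Gaussian elimination) solves for each coefficient. *)
  have on_monomials: "\<forall>m\<in>invariant_monomials. c m = Fc m"
    unfolding invariant_monomials_eq
    by (simp only: list.set ball_simps)
      (intro conjI; simp add: Fc_def del: One_nat_def; use eqs in algebra)
  fix m
  show "c m = Fc m"
  proof (cases "m \<in> invariant_monomials")
    case True
    then show ?thesis using on_monomials by blast
  next
    case False
    then have "c m = 0" and "Fc m = 0"
      using supp supp3_Fc by (auto simp: supp3_def)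
    then show ?thesis by simp
  qed
qed

theorem lemma5p1:
  fixes \<eta> :: complex and G :: poly3
  assumes eta_prim: "\<eta> ^ 7 = 1" "\<forall>k::nat. 0 < k \<and> k < 7 \<longrightarrow> \<eta> ^ k \<noteq> 1"
    and G_poly: "is_poly3 G"
    and G_inv: "\<forall>x y z :: complex. eval3 G (\<eta> * x) (\<eta>^2 * y) (\<eta>^4 * z) = eval3 G x y z"
    and G_plane: "\<forall>x y z :: real. x + y + z = 1 \<longrightarrow> eval3 G x y z = 1"
    and G_nonneg: "\<forall>m. G m \<ge> 0"
    and G_zero: "eval3 G (0::real) 0 0 = 0"
  shows "G = Fc \<or> tdeg3 G \<ge> 10"
proof (rule disjCI)
  assume "\<not> tdeg3 G \<ge> 10"
  have inv_111: "eval3 G (\<eta> ^ 1) (\<eta> ^ 2) (\<eta> ^ 4) = eval3 G 1 1 1"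
    using G_inv[rule_format, of 1 1 1] by simp
  have G_origin: "G (0, 0, 0) = 0"
    using G_zero eval3_origin[OF G_poly] by simp
  have "supp3 G \<subseteq> invariant_monomials"
  proof (clarify)
    fix a b d
    assume m: "(a, b, d) \<in> supp3 G"
    have "a + b + d \<le> 9"
      using le_tdeg3[OF G_poly m] \<open>\<not> tdeg3 G \<ge> 10\<close> by simp
    moreover have "7 dvd 1 * a + 2 * b + 4 * d"
      using weight_dvd_if_eval3_root_of_unity_eq[OF _ eta_prim G_poly G_nonneg inv_111 m] by simp
    moreover have "(a, b, d) \<noteq> (0, 0, 0)"
      using m G_origin by (metis mem_Collect_eq supp3_def)
    ultimately show "(a, b, d) \<in> invariant_monomials"
      by (auto simp: invariant_monomials_def)
  qed
  then show "G = Fc"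
    using G_plane by (rule eq_Fc_if_one_on_plane)
qed

end
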